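(* Let $R$ be a commutative elementary divisor domain and let $E=\mathrm{diag}(\varepsilon_1,\dots,\varepsilon_k,0,\dots,0)$ and $\Phi=\mathrm{diag}(\varphi_1,\dots,\varphi_t,0,\dots,0)$ be $n\times n$ $d$-matrices with $\varepsilon_k\ne0$, $\varphi_t\ne0$. If $\Phi\mid E$ (i.e. $k\le t$ and $\varphi_i\mid\varepsilon_i$ for $i=1,\dots,k$), then $\mathbf L(E,\Phi)$ consists exactly of the invertible $n\times n$ matrices $L=(l_{ij})$ such that $\frac{\varphi_i}{(\varphi_i,\varepsilon_j)}\mid l_{ij}$ for all $1\le i\le t$, $1\le j\le k$, and $l_{ij}=0$ for all $t<i\le n$, $1\le j\le k$ (entries in columns $k+1,\dots,n$ are unrestricted). If $\Phi\nmid E$, then $\mathbf L(E,\Phi)=\emptyset$.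
   Context: Elementary divisor domain: commutative integral domain over which every matrix is equivalent to a $d$-matrix, i.e. a diagonal matrix $\mathrm{diag}(\varphi_1,\dots)$ with $\varphi_i\mid\varphi_{i+1}$. For $n\times n$ $d$-matrices $E,\Phi$, the generating set is $\mathbf L(E,\Phi)=\{L\in GL_n(R):\ \exists S\in M_n(R),\ LE=\Phi S\}$. *)

theory Defs
  imports "Jordan_Normal_Form.Matrix"
begin

definition d_matrix :: "'a::comm_ring_1 mat \<Rightarrow> bool" where
  "d_matrix D \<longleftrightarrow>
     (\<forall>i j. i < dim_row D \<and> j < dim_col D \<and> i \<noteq> j \<longrightarrow> D $$ (i, j) = 0) \<and>
     (\<forall>i. Suc i < min (dim_row D) (dim_col D) \<longrightarrow> D $$ (i, i) dvd D $$ (Suc i, Suc i))"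

definition elementary_divisor_domain :: "'a::idom itself \<Rightarrow> bool" where
  "elementary_divisor_domain _ \<longleftrightarrow>
     (\<forall>m n (A :: 'a mat). A \<in> carrier_mat m n \<longrightarrow>
        (\<exists>P Q. P \<in> carrier_mat m m \<and> Q \<in> carrier_mat n n \<and>
               invertible_mat P \<and> invertible_mat Q \<and> d_matrix (P * A * Q)))"

definition is_gcd :: "'a::comm_ring_1 \<Rightarrow> 'a \<Rightarrow> 'a \<Rightarrow> bool" where
  "is_gcd d a b \<longleftrightarrow> d dvd a \<and> d dvd b \<and> (\<forall>c. c dvd a \<and> c dvd b \<longrightarrow> c dvd d)"

(* the n x n matrix diag(x_0, ..., x_{r-1}, 0, ..., 0)  (0-based indices) *)
definition dmat :: "nat \<Rightarrow> nat \<Rightarrow> (nat \<Rightarrow> 'a::zero) \<Rightarrow> 'a mat" where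
  "dmat n r x = mat n n (\<lambda>(i, j). if i = j \<and> i < r then x i else 0)"

definition Lset :: "nat \<Rightarrow> 'a::comm_ring_1 mat \<Rightarrow> 'a mat \<Rightarrow> 'a mat set" where
  "Lset n E Phi = {L \<in> carrier_mat n n. invertible_mat L \<and>
                     (\<exists>S \<in> carrier_mat n n. L * E = Phi * S)}"

end

theory Submission imports Defs "Jordan_Normal_Form.Determinant" begin

text \<open>
  Since both matrices are diagonal, \<open>L E = \<Phi> S\<close> is an entrywise condition: \<open>\<phi>\<^sub>i\<close> divides
  \<open>l\<^sub>i\<^sub>j \<epsilon>\<^sub>j\<close> for \<open>i < t\<close>, \<open>j < k\<close>, and \<open>l\<^sub>i\<^sub>j \<epsilon>\<^sub>j = 0\<close>, i.e. \<open>l\<^sub>i\<^sub>j = 0\<close>, for \<open>i \<ge> t\<close>, \<open>j < k\<close>.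
  An elementary divisor domain is a Bezout domain, and there \<open>\<phi>\<^sub>i\<close> divides \<open>l\<^sub>i\<^sub>j \<epsilon>\<^sub>j\<close> iff
  \<open>\<phi>\<^sub>i / (\<phi>\<^sub>i, \<epsilon>\<^sub>j)\<close> divides \<open>l\<^sub>i\<^sub>j\<close>.

  For the necessity of \<open>\<Phi> | E\<close>, fix \<open>i < k\<close> and let \<open>M\<close> be the inverse of \<open>L\<close>. By the
  divisibility chains, \<open>\<epsilon>\<^sub>i\<close> times any entry of the first \<open>i + 1\<close> columns of \<open>L\<close> in a row
  \<open>\<ge> i\<close> lies in \<open>(\<phi>\<^sub>i)\<close>. Split the leading \<open>(i+1) \<times> (i+1)\<close> block of \<open>M L = I\<close> into the
  contributions of the rows \<open>< i\<close> and \<open>\<ge> i\<close> of \<open>L\<close>: the first has rank at most \<open>i\<close>, hence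
  determinant \<open>0\<close>, and agrees with \<open>I\<close> modulo the ideal \<open>{x. \<phi>\<^sub>i | x \<epsilon>\<^sub>i}\<close>; so \<open>\<phi>\<^sub>i | \<epsilon>\<^sub>i\<close>.
  The same argument with the rows \<open>< t\<close> and the first \<open>k\<close> columns yields \<open>k \<le> t\<close>.
\<close>

lemma index_mult_mat_sum:
  "A \<in> carrier_mat m p \<Longrightarrow> B \<in> carrier_mat p q \<Longrightarrow> i < m \<Longrightarrow> j < q \<Longrightarrow>
    (A * B) $$ (i, j) = (\<Sum>l<p. A $$ (i, l) * B $$ (l, j))"
  by (simp add: scalar_prod_def atLeast0LessThan)

lemma index_mult_dmat_right:
  assumes L: "L \<in> carrier_mat n n" and i: "i < n" and j: "j < n"
  shows "(L * dmat n k x) $$ (i, j) = L $$ (i, j) * (if j < k then x j else 0)"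
proof -
  have "(L * dmat n k x) $$ (i, j) = (\<Sum>l<n. L $$ (i, l) * dmat n k x $$ (l, j))"
    using assms by (intro index_mult_mat_sum) (auto simp: dmat_def)
  also have "\<dots> = (\<Sum>l<n. if l = j then L $$ (i, j) * (if j < k then x j else 0) else 0)"
    using j by (intro sum.cong) (auto simp: dmat_def)
  finally show ?thesis using j by simp
qed

lemma index_dmat_mult_left:
  assumes S: "S \<in> carrier_mat n n" and i: "i < n" and j: "j < n"
  shows "(dmat n t x * S) $$ (i, j) = (if i < t then x i else 0) * S $$ (i, j)"
proof -
  have "(dmat n t x * S) $$ (i, j) = (\<Sum>l<n. dmat n t x $$ (i, l) * S $$ (l, j))"
    using assms by (intro index_mult_mat_sum) (auto simp: dmat_def)
  also have "\<dots> = (\<Sum>l<n. if l = i then (if i < t then x i else 0) * S $$ (i, j) else 0)"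
    using i by (intro sum.cong) (auto simp: dmat_def)
  finally show ?thesis using i by simp
qed

lemma d_matrix_dmat_dvd:
  assumes d: "d_matrix (dmat n k x)" and k: "k \<le> n" and ij: "i \<le> j" "j < k"
  shows "x i dvd x j"
  using ij
proof (induction j)
  case 0
  then show ?case by simp
next
  case (Suc j)
  have "dmat n k x $$ (j, j) dvd dmat n k x $$ (Suc j, Suc j)"
    using d Suc.prems k unfolding d_matrix_def by (auto simp: dmat_def simp del: index_mat)
  then have "x j dvd x (Suc j)" using Suc.prems k by (simp add: dmat_def)
  then show ?case using Suc by (cases "i = Suc j") (auto intro: dvd_trans)
qed

lemma d_matrix_dmat_nonzero:
  assumes d: "d_matrix (dmat n k x)" and k: "k \<le> n" and last: "x (k - 1) \<noteq> 0" and j: "j < k"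
  shows "x j \<noteq> 0"
proof
  assume "x j = 0"
  moreover have "x j dvd x (k - 1)" using d_matrix_dmat_dvd[OF d k, of j "k - 1"] j by simp
  ultimately show False using last by simp
qed

lemma invertible_matE:
  assumes "P \<in> carrier_mat m m" "invertible_mat P"
  obtains P' where "P' \<in> carrier_mat m m" "P' * P = 1\<^sub>m m" "P * P' = 1\<^sub>m m"
proof -
  obtain P' where a: "P * P' = 1\<^sub>m (dim_row P)" and b: "P' * P = 1\<^sub>m (dim_row P')"
    using assms unfolding invertible_mat_def inverts_mat_def by blast
  have "dim_col P' = m" using a assms by (metis carrier_matD index_mult_mat(3) index_one_mat(3))
  moreover have "dim_row P' = m" using b assms by (metis carrier_matD(2) index_mult_mat(3) index_one_mat(3))
  ultimately show ?thesis using a b assms that by auto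
qed

text \<open>Reduce the \<open>1 \<times> 2\<close> matrix \<open>(a b)\<close> to \<open>(d 0)\<close>: then \<open>d\<close> is a combination of \<open>a, b\<close>
  read off from \<open>P A Q\<close>, and divides both since \<open>A = P\<^sup>-\<^sup>1 (d 0) Q\<^sup>-\<^sup>1\<close>.\<close>
lemma elementary_divisor_domain_bezout:
  fixes a b :: "'a::idom"
  assumes edd: "elementary_divisor_domain TYPE('a)"
  obtains d x y where "d dvd a" "d dvd b" "d = x * a + y * b"
proof -
  define A where "A = mat 1 2 (\<lambda>(i, j). if j = 0 then a else b)"
  have A: "A \<in> carrier_mat 1 2" by (simp add: A_def)
  obtain P Q where P: "P \<in> carrier_mat 1 1" and Q: "Q \<in> carrier_mat 2 2"
    and Pi: "invertible_mat P" and Qi: "invertible_mat Q" and dm: "d_matrix (P * A * Q)"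
    using edd A unfolding elementary_divisor_domain_def by blast
  define D where "D = P * A * Q"
  have D: "D \<in> carrier_mat 1 2" using P Q A by (simp add: D_def)
  have D01: "D $$ (0, 1) = 0" using dm D unfolding D_def[symmetric] d_matrix_def by auto
  obtain P' where P': "P' \<in> carrier_mat 1 1" "P' * P = 1\<^sub>m 1" using invertible_matE[OF P Pi] by blast
  obtain Q' where Q': "Q' \<in> carrier_mat 2 2" "Q * Q' = 1\<^sub>m 2" using invertible_matE[OF Q Qi] by blast
  have PA: "P * A \<in> carrier_mat 1 2" using P A by simp
  have "D * Q' = P * A * (Q * Q')" unfolding D_def using assoc_mult_mat[OF PA Q Q'(1)] .
  then have DQ': "D * Q' = P * A" using Q' by (simp add: right_mult_one_mat[OF PA])
  have "A = P' * P * A" using A P' by simp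
  also have "\<dots> = P' * (D * Q')" unfolding DQ' using assoc_mult_mat[OF P'(1) P A] by simp
  also have "\<dots> = P' * D * Q'" using assoc_mult_mat[OF P'(1) D Q'(1)] by simp
  finally have AD: "A = P' * D * Q'" .
  have P'D: "P' * D \<in> carrier_mat 1 2" using P' D by simp
  have entry: "A $$ (0, j) = P' $$ (0, 0) * D $$ (0, 0) * Q' $$ (0, j)" if j: "j < 2" for j
  proof -
    have "A $$ (0, j) = (\<Sum>l<2. (P' * D) $$ (0, l) * Q' $$ (l, j))"
      unfolding AD using j by (intro index_mult_mat_sum[OF P'D Q'(1)]) auto
    also have "\<dots> = (\<Sum>l<2. (P' $$ (0, 0) * D $$ (0, l)) * Q' $$ (l, j))"
      by (intro sum.cong refl) (simp add: index_mult_mat_sum[OF P'(1) D])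
    finally show ?thesis using D01 by (simp add: numeral_2_eq_2)
  qed
  have "A $$ (0, 0) = a" "A $$ (0, 1) = b" by (auto simp: A_def)
  then have da: "D $$ (0, 0) dvd a" and db: "D $$ (0, 0) dvd b"
    using entry[of 0] entry[of 1] by auto
  have "D $$ (0, 0) = (\<Sum>l<2. (P * A) $$ (0, l) * Q $$ (l, 0))"
    unfolding D_def by (intro index_mult_mat_sum[OF PA Q]) auto
  also have "\<dots> = (\<Sum>l<2. (P $$ (0, 0) * A $$ (0, l)) * Q $$ (l, 0))"
    by (intro sum.cong refl) (simp add: index_mult_mat_sum[OF P A])
  also have "\<dots> = (P $$ (0, 0) * Q $$ (0, 0)) * a + (P $$ (0, 0) * Q $$ (1, 0)) * b"
    by (simp add: numeral_2_eq_2 A_def algebra_simps)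
  finally show ?thesis using that da db by blast
qed

lemma dvd_mult_iff_gcd_cofactor_dvd:
  fixes p e l :: "'a::idom"
  assumes edd: "elementary_divisor_domain TYPE('a)" and p0: "p \<noteq> 0"
  shows "p dvd l * e \<longleftrightarrow> (\<exists>d q. is_gcd d p e \<and> p = d * q \<and> q dvd l)"
proof
  assume h: "p dvd l * e"
  obtain d x y where dp: "d dvd p" and de: "d dvd e" and dxy: "d = x * p + y * e"
    using elementary_divisor_domain_bezout[OF edd] by blast
  have g: "is_gcd d p e" unfolding is_gcd_def using dp de dxy by auto
  obtain q where pq: "p = d * q" using dp by (auto elim: dvdE)
  obtain e' where ee: "e = d * e'" using de by (auto elim: dvdE)
  have d0: "d \<noteq> 0" using p0 pq by auto
  have "d * 1 = d * (x * q + y * e')" using dxy pq ee by (simp add: algebra_simps)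
  then have one: "1 = x * q + y * e'" using d0 by (metis mult_cancel_left)
  have "d * q dvd d * (l * e')" using h pq ee by (simp add: algebra_simps)
  then have "q dvd l * e'" using d0 by simp
  then have "q dvd (l * x) * q + y * (l * e')" by (intro dvd_add) auto
  moreover have "l * 1 = (l * x) * q + y * (l * e')" unfolding one by (simp add: algebra_simps)
  ultimately have "q dvd l" by (metis mult_1_right)
  then show "\<exists>d q. is_gcd d p e \<and> p = d * q \<and> q dvd l" using g pq by auto
next
  assume "\<exists>d q. is_gcd d p e \<and> p = d * q \<and> q dvd l"
  then obtain d q where g: "is_gcd d p e" and pq: "p = d * q" and ql: "q dvd l" by blast
  obtain e' where ee: "e = d * e'" using g unfolding is_gcd_def by (auto elim: dvdE)
  obtain r where lr: "l = q * r" using ql by (auto elim: dvdE)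
  have "l * e = p * (r * e')" using lr ee pq by (simp add: algebra_simps)
  then show "p dvd l * e" by simp
qed

text \<open>The hypotheses of the next two lemmas say that \<open>f i \<equiv> g i\<close>, resp. \<open>X \<equiv> Y\<close> entrywise, modulo
  the ideal \<open>{x. c dvd x * e}\<close>.\<close>
lemma prod_diff_dvd:
  fixes c e :: "'a::comm_ring_1"
  assumes "finite A" "\<forall>i\<in>A. c dvd (f i - g i) * e"
  shows "c dvd (prod f A - prod g A) * e"
  using assms
proof (induction A rule: finite_induct)
  case empty
  then show ?case by simp
next
  case (insert a A)
  have "(prod f (insert a A) - prod g (insert a A)) * e
      = ((f a - g a) * e) * prod f A + g a * ((prod f A - prod g A) * e)"
    using insert.hyps by (simp add: algebra_simps)
  moreover have "c dvd ((f a - g a) * e) * prod f A" using insert by auto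
  moreover have "c dvd g a * ((prod f A - prod g A) * e)" using insert by auto
  ultimately show ?case by simp
qed

lemma det_diff_dvd:
  fixes c e :: "'a::comm_ring_1"
  assumes X: "X \<in> carrier_mat b b" and Y: "Y \<in> carrier_mat b b"
    and XY: "\<forall>i j. i < b \<longrightarrow> j < b \<longrightarrow> c dvd (X $$ (i, j) - Y $$ (i, j)) * e"
  shows "c dvd (det X - det Y) * e"
proof -
  let ?P = "{p. p permutes {0..<b}}"
  have "det X - det Y = (\<Sum>p\<in>?P.
      signof p * (prod (\<lambda>i. X $$ (i, p i)) {0..<b} - prod (\<lambda>i. Y $$ (i, p i)) {0..<b}))"
    unfolding det_def'[OF X] det_def'[OF Y] by (simp add: sum_subtractf right_diff_distrib)
  then have "(det X - det Y) * e = (\<Sum>p\<in>?P.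
      signof p * ((prod (\<lambda>i. X $$ (i, p i)) {0..<b} - prod (\<lambda>i. Y $$ (i, p i)) {0..<b}) * e))"
    by (simp add: sum_distrib_right mult.assoc)
  also have "c dvd \<dots>"
  proof (rule dvd_sum)
    fix p assume p: "p \<in> ?P"
    have "c dvd (prod (\<lambda>i. X $$ (i, p i)) {0..<b} - prod (\<lambda>i. Y $$ (i, p i)) {0..<b}) * e"
      using XY p by (intro prod_diff_dvd) (auto dest: permutes_in_image)
    then show "c dvd signof p * ((prod (\<lambda>i. X $$ (i, p i)) {0..<b} - prod (\<lambda>i. Y $$ (i, p i)) {0..<b}) * e)"
      by (rule dvd_mult)
  qed
  finally show ?thesis .
qed

lemma det_zero_row:
  assumes A: "A \<in> carrier_mat n n" and k: "k < n" and row: "\<forall>j<n. A $$ (k, j) = 0"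
  shows "det A = 0"
  unfolding det_def'[OF A]
proof (intro sum.neutral ballI)
  fix p assume "p \<in> {p. p permutes {0..<n}}"
  then have "A $$ (k, p k) = 0" using k row by (auto dest: permutes_in_image)
  then have "(\<Prod>i = 0..<n. A $$ (i, p i)) = 0" using k by (intro prod_zero) auto
  then show "signof p * (\<Prod>i = 0..<n. A $$ (i, p i)) = 0" by simp
qed

text \<open>The case \<open>b = a + 1\<close> yields \<open>\<phi>\<^sub>a | \<epsilon>\<^sub>a\<close>; the case \<open>c = 0\<close>, \<open>e = 1\<close> says that the first \<open>b\<close>
  columns of an invertible matrix cannot vanish below row \<open>a < b\<close>.\<close>
lemma invertible_mat_lower_block_dvd:
  fixes c e :: "'a::comm_ring_1"
  assumes L: "L \<in> carrier_mat n n" and Li: "invertible_mat L" and ab: "a < b" "b \<le> n"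
    and lower: "\<forall>r j. a \<le> r \<longrightarrow> r < n \<longrightarrow> j < b \<longrightarrow> c dvd L $$ (r, j) * e"
  shows "c dvd e"
proof -
  obtain M where M: "M \<in> carrier_mat n n" and inv: "M * L = 1\<^sub>m n"
    using invertible_matE[OF L Li] by blast
  define A where "A = mat b b (\<lambda>(j, r). if r < a then M $$ (j, r) else 0)"
  define B where "B = mat b b (\<lambda>(r, j). if r < a then L $$ (r, j) else 0)"
  have A: "A \<in> carrier_mat b b" and B: "B \<in> carrier_mat b b" by (auto simp: A_def B_def)
  have "det B = 0" using ab by (intro det_zero_row[OF B, where k = a]) (auto simp: B_def)
  then have detAB: "det (A * B) = 0" unfolding det_mult[OF A B] by simp
  have "c dvd (det (A * B) - det (1\<^sub>m b)) * e"
  proof (intro det_diff_dvd allI impI)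
    fix j j' assume j: "j < b" and j': "j' < b"
    have "(A * B) $$ (j, j') = (\<Sum>r<b. A $$ (j, r) * B $$ (r, j'))"
      using j j' by (intro index_mult_mat_sum[OF A B])
    also have "\<dots> = (\<Sum>r<b. if r < a then M $$ (j, r) * L $$ (r, j') else 0)"
      using j j' by (intro sum.cong) (auto simp: A_def B_def)
    also have "\<dots> = (\<Sum>r<a. M $$ (j, r) * L $$ (r, j'))"
    proof -
      have "{..<b} \<inter> {r. r < a} = {..<a}" using ab by auto
      then show ?thesis by (simp add: sum.If_cases)
    qed
    finally have AB: "(A * B) $$ (j, j') = (\<Sum>r<a. M $$ (j, r) * L $$ (r, j'))" .
    have "1\<^sub>m b $$ (j, j') = (M * L) $$ (j, j')" using inv j j' ab by auto
    also have "\<dots> = (\<Sum>r<n. M $$ (j, r) * L $$ (r, j'))"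
      using j j' ab by (intro index_mult_mat_sum[OF M L]) auto
    also have "\<dots> = (\<Sum>r<a. M $$ (j, r) * L $$ (r, j')) + (\<Sum>r\<in>{a..<n}. M $$ (j, r) * L $$ (r, j'))"
      using ab by (simp add: atLeast0LessThan[symmetric] sum.atLeastLessThan_concat)
    finally have "(A * B) $$ (j, j') - 1\<^sub>m b $$ (j, j') = - (\<Sum>r\<in>{a..<n}. M $$ (j, r) * L $$ (r, j'))"
      using AB by simp
    moreover have "c dvd (\<Sum>r\<in>{a..<n}. M $$ (j, r) * L $$ (r, j')) * e"
      unfolding sum_distrib_right using lower j' by (intro dvd_sum) (auto simp: mult.assoc)
    ultimately show "c dvd ((A * B) $$ (j, j') - 1\<^sub>m b $$ (j, j')) * e" by simp
  qed (use A B in auto)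
  then show ?thesis using detAB by simp
qed

lemma Lset_dmat_eq:
  fixes eps phi :: "nat \<Rightarrow> 'a::idom"
  assumes eps: "\<forall>j<k. eps j \<noteq> 0" and kn: "k \<le> n" and tn: "t \<le> n"
  shows "Lset n (dmat n k eps) (dmat n t phi) =
    {L \<in> carrier_mat n n. invertible_mat L \<and> (\<forall>i<t. \<forall>j<k. phi i dvd L $$ (i, j) * eps j) \<and>
       (\<forall>i j. t \<le> i \<and> i < n \<and> j < k \<longrightarrow> L $$ (i, j) = 0)}"
proof -
  have entrywise: "L * dmat n k eps = dmat n t phi * S \<longleftrightarrow>
      (\<forall>i<n. \<forall>j<n. L $$ (i, j) * (if j < k then eps j else 0) = (if i < t then phi i else 0) * S $$ (i, j))"
    if L: "L \<in> carrier_mat n n" and S: "S \<in> carrier_mat n n" for L S :: "'a mat"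
  proof -
    have "L * dmat n k eps = dmat n t phi * S \<longleftrightarrow>
        (\<forall>i<n. \<forall>j<n. (L * dmat n k eps) $$ (i, j) = (dmat n t phi * S) $$ (i, j))"
      using L S by (auto simp: mat_eq_iff dmat_def simp del: index_mult_mat(1))
    then show ?thesis by (simp add: index_mult_dmat_right[OF L] index_dmat_mult_left[OF S])
  qed
  have exists_S: "(\<exists>S \<in> carrier_mat n n. L * dmat n k eps = dmat n t phi * S) \<longleftrightarrow>
      (\<forall>i<t. \<forall>j<k. phi i dvd L $$ (i, j) * eps j) \<and> (\<forall>i j. t \<le> i \<and> i < n \<and> j < k \<longrightarrow> L $$ (i, j) = 0)"
    if L: "L \<in> carrier_mat n n" for L
  proof safe
    fix S assume S: "S \<in> carrier_mat n n" and "L * dmat n k eps = dmat n t phi * S"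
    then have e: "L $$ (i, j) * (if j < k then eps j else 0) = (if i < t then phi i else 0) * S $$ (i, j)"
      if "i < n" "j < n" for i j using entrywise[OF L S] that by blast
    show "phi i dvd L $$ (i, j) * eps j" if "i < t" "j < k" for i j
      using e[of i j] that kn tn by (simp add: dvd_def)
    show "L $$ (i, j) = 0" if "t \<le> i" "i < n" "j < k" for i j
      using e[of i j] that kn eps by auto
  next
    assume dvd: "\<forall>i<t. \<forall>j<k. phi i dvd L $$ (i, j) * eps j"
      and zero: "\<forall>i j. t \<le> i \<and> i < n \<and> j < k \<longrightarrow> L $$ (i, j) = 0"
    define s where "s i j = (SOME s. L $$ (i, j) * eps j = phi i * s)" for i j
    have s: "L $$ (i, j) * eps j = phi i * s i j" if "i < t" "j < k" for i j
      unfolding s_def by (rule someI_ex) (use dvd that in \<open>auto simp: dvd_def mult.commute\<close>)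
    define S where "S = mat n n (\<lambda>(i, j). if i < t \<and> j < k then s i j else 0)"
    have S: "S \<in> carrier_mat n n" by (simp add: S_def)
    have "L * dmat n k eps = dmat n t phi * S"
      unfolding entrywise[OF L S] using s zero by (auto simp: S_def)
    then show "\<exists>S \<in> carrier_mat n n. L * dmat n k eps = dmat n t phi * S" using S by blast
  qed
  then show ?thesis unfolding Lset_def by (intro Collect_cong) (use exists_S in blast)
qed

lemma Lset_dmat_nonempty_imp_dvd:
  fixes eps phi :: "nat \<Rightarrow> 'a::idom"
  assumes dE: "d_matrix (dmat n k eps)" and dPhi: "d_matrix (dmat n t phi)"
    and eps: "\<forall>j<k. eps j \<noteq> 0" and kn: "k \<le> n" and tn: "t \<le> n"
    and L: "L \<in> Lset n (dmat n k eps) (dmat n t phi)"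
  shows "k \<le> t \<and> (\<forall>i<k. phi i dvd eps i)"
proof -
  have Lc: "L \<in> carrier_mat n n" and Li: "invertible_mat L"
    and upper: "\<forall>i<t. \<forall>j<k. phi i dvd L $$ (i, j) * eps j"
    and lower: "\<forall>i j. t \<le> i \<and> i < n \<and> j < k \<longrightarrow> L $$ (i, j) = 0"
    using L unfolding Lset_dmat_eq[OF eps kn tn] by auto
  have kt: "k \<le> t"
  proof (rule ccontr)
    assume "\<not> k \<le> t"
    then have "(0::'a) dvd 1"
      using lower kn by (intro invertible_mat_lower_block_dvd[OF Lc Li, of t k]) auto
    then show False by simp
  qed
  have "phi i dvd eps i" if i: "i < k" for i
  proof (rule invertible_mat_lower_block_dvd[OF Lc Li, of i "Suc i"])
    show "i < Suc i" "Suc i \<le> n" using i kn by auto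
    show "\<forall>r j. i \<le> r \<longrightarrow> r < n \<longrightarrow> j < Suc i \<longrightarrow> phi i dvd L $$ (r, j) * eps i"
    proof (intro allI impI)
      fix r j assume r: "i \<le> r" "r < n" and j: "j < Suc i"
      show "phi i dvd L $$ (r, j) * eps i"
      proof (cases "r < t")
        case True
        have "phi i dvd phi r" using d_matrix_dmat_dvd[OF dPhi tn] r True by auto
        also have "\<dots> dvd L $$ (r, j) * eps j" using upper True j i by auto
        also have "\<dots> dvd L $$ (r, j) * eps i" using d_matrix_dmat_dvd[OF dE kn, of j i] j i by auto
        finally show ?thesis .
      next
        case False
        then show ?thesis using lower r j i by auto
      qed
    qed
  qed
  then show ?thesis using kt by blast
qed

theorem theorem4p1:
  fixes eps phi :: "nat \<Rightarrow> 'a::idom" and n k t :: nat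
  assumes edd: "elementary_divisor_domain TYPE('a)"
    and k: "0 < k" "k \<le> n" and t: "0 < t" "t \<le> n"
    and dE: "d_matrix (dmat n k eps)" and dPhi: "d_matrix (dmat n t phi)"
    and ek: "eps (k - 1) \<noteq> 0" and pt: "phi (t - 1) \<noteq> 0"
  shows "((k \<le> t \<and> (\<forall>i<k. phi i dvd eps i)) \<longrightarrow>
           Lset n (dmat n k eps) (dmat n t phi) =
             {L \<in> carrier_mat n n. invertible_mat L \<and>
                (\<forall>i<t. \<forall>j<k. \<exists>d q. is_gcd d (phi i) (eps j) \<and> phi i = d * q \<and> q dvd L $$ (i, j)) \<and>
                (\<forall>i j. t \<le> i \<and> i < n \<and> j < k \<longrightarrow> L $$ (i, j) = 0)}) \<and>
         (\<not> (k \<le> t \<and> (\<forall>i<k. phi i dvd eps i)) \<longrightarrow>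
           Lset n (dmat n k eps) (dmat n t phi) = {})"
proof -
  have eps: "\<forall>j<k. eps j \<noteq> 0" using d_matrix_dmat_nonzero[OF dE k(2) ek] by blast
  have phi: "\<forall>i<t. phi i \<noteq> 0" using d_matrix_dmat_nonzero[OF dPhi t(2) pt] by blast
  have "Lset n (dmat n k eps) (dmat n t phi) =
             {L \<in> carrier_mat n n. invertible_mat L \<and>
                (\<forall>i<t. \<forall>j<k. \<exists>d q. is_gcd d (phi i) (eps j) \<and> phi i = d * q \<and> q dvd L $$ (i, j)) \<and>
                (\<forall>i j. t \<le> i \<and> i < n \<and> j < k \<longrightarrow> L $$ (i, j) = 0)}"
    unfolding Lset_dmat_eq[OF eps k(2) t(2)] using dvd_mult_iff_gcd_cofactor_dvd[OF edd] phi by simp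
  moreover have "Lset n (dmat n k eps) (dmat n t phi) = {}" if "\<not> (k \<le> t \<and> (\<forall>i<k. phi i dvd eps i))"
    using Lset_dmat_nonempty_imp_dvd[OF dE dPhi eps k(2) t(2)] that by blast
  ultimately show ?thesis by blast
qed

end
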